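(* Let $S=(U,F)$ be an undirected graph on $q$ nodes, possibly with self-loops, and let $n'$ be a nonnegative integer. Let $A'\in\mathcal{A}(S)$ be such that $n'A'$ is integer-valued and $\operatorname{diag}A'=0$, and set $x'=A'\mathbf{1}$. Then the directed graph $\vec G'$, where $G'=M(n'x',S)$, admits a Hamiltonian decomposition $H'$ with $\rho(H')=A'$ and such that every cycle of $H'$ is simple.
   Context: An undirected graph $G=(V,E)$ without self-loops is complete $S$-multipartite if there is a map $\pi:V\to U$ such that for distinct $v,w\in V$, $(v,w)\in E$ iff $(\pi(v),\pi(w))\in F$; $M(w,S)$ denotes the complete $S$-multipartite graph with $|\pi^{-1}(u_i)|=w_i$. $\vec G$ replaces each edge $(v,w)$ by the directed edges $vw$ and $wv$. A Hamiltonian decomposition of a digraph is a spanning subgraph that is a node-disjoint union of directed cycles covering all nodes. For a Hamiltonian decomposition $H$ of $\vec G$ with $G$ on $n$ nodes, $\rho(H)=\frac1n[n_{ij}(H)]$ where $n_{ij}(H)$ counts edges of $H$ from $\pi^{-1}(u_i)$ to $\pi^{-1}(u_j)$. A directed cycle is simple if its image under $\pi$ is a cycle (no repeated nodes) of $\vec S$. $\mathcal{A}(S)$ is the set of nonnegative $q\times q$ matrices $A$ with $a_{ij}=0$ whenever $(u_i,u_j)\notin F$, $A\mathbf{1}=A^\top\mathbf{1}$, and $\mathbf{1}^\top A\mathbf{1}=1$. *)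

theory Defs
  imports Complex_Main
begin

text \<open>The graph S = (U,F) has node set U = {0..<q}; F is a symmetric set of pairs
  (self-loops allowed).  Matrices indexed by U are functions nat => nat => real,
  only the entries with indices < q matter.\<close>

definition in_calA :: "nat \<Rightarrow> (nat \<times> nat) set \<Rightarrow> (nat \<Rightarrow> nat \<Rightarrow> real) \<Rightarrow> bool" where
  "in_calA q F A \<longleftrightarrow>
     (\<forall>i<q. \<forall>j<q. 0 \<le> A i j \<and> ((i, j) \<notin> F \<longrightarrow> A i j = 0)) \<and>
     (\<forall>i<q. (\<Sum>j<q. A i j) = (\<Sum>j<q. A j i)) \<and>
     (\<Sum>i<q. \<Sum>j<q. A i j) = 1"

text \<open>Complete S-multipartite graph M(w,S): nodes are pairs (i,k) with k < w i,
  the map pi is fst; distinct nodes v, u are adjacent iff (pi v, pi u) \<in> F.\<close>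

definition mp_nodes :: "nat \<Rightarrow> (nat \<Rightarrow> nat) \<Rightarrow> (nat \<times> nat) set" where
  "mp_nodes q w = {(i, k). i < q \<and> k < w i}"

definition mp_arcs :: "nat \<Rightarrow> (nat \<times> nat) set \<Rightarrow> (nat \<Rightarrow> nat) \<Rightarrow> ((nat \<times> nat) \<times> (nat \<times> nat)) set" where
  "mp_arcs q F w = {(v, u). v \<in> mp_nodes q w \<and> u \<in> mp_nodes q w \<and> v \<noteq> u \<and> (fst v, fst u) \<in> F}"

text \<open>Hamiltonian decomposition: a spanning subgraph (set of arcs) in which every node
  has exactly one outgoing and exactly one incoming arc, i.e. a node-disjoint union of
  directed cycles covering all nodes.\<close>
definition ham_decomp :: "'v set \<Rightarrow> ('v \<times> 'v) set \<Rightarrow> ('v \<times> 'v) set \<Rightarrow> bool" where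
  "ham_decomp V Arcs H \<longleftrightarrow> H \<subseteq> Arcs \<and>
     (\<forall>v\<in>V. \<exists>!u. (v, u) \<in> H) \<and> (\<forall>v\<in>V. \<exists>!u. (u, v) \<in> H)"

definition cycle_nodes :: "('v \<times> 'v) set \<Rightarrow> 'v \<Rightarrow> 'v set" where
  "cycle_nodes H v = {u. (v, u) \<in> H\<^sup>*}"

definition all_cycles_simple :: "('v \<Rightarrow> 'u) \<Rightarrow> 'v set \<Rightarrow> ('v \<times> 'v) set \<Rightarrow> bool" where
  "all_cycles_simple \<pi> V H \<longleftrightarrow> (\<forall>v\<in>V. inj_on \<pi> (cycle_nodes H v))"

definition n_count :: "((nat \<times> nat) \<times> (nat \<times> nat)) set \<Rightarrow> nat \<Rightarrow> nat \<Rightarrow> nat" where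
  "n_count H i j = card {(v, u) \<in> H. fst v = i \<and> fst u = j}"

end

theory Submission
  imports Defs
begin

text \<open>Scaling by \<open>n'\<close> turns \<open>A'\<close> into a balanced nonnegative integer matrix \<open>N\<close> with zero
  diagonal, supported on \<open>F\<close>. By balance, every part entered by the support of \<open>N\<close> is also
  left by it, so a successor map \<open>i \<mapsto> j\<close> with \<open>N i j > 0\<close> maps the support into itself; on a
  smallest invariant subset \<open>C\<close> it is a permutation \<open>\<sigma>\<close>. Subtracting the permutation matrix of
  \<open>\<sigma>\<close> keeps \<open>N\<close> balanced, so by induction the smaller matrix is realised by a Hamiltonian
  decomposition; adding one new node to every part in \<open>C\<close> and joining these nodes along \<open>\<sigma>\<close>
  realises \<open>N\<close>. The new cycles meet every part at most once, hence they are simple.\<close>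

lemma mp_nodes_eq: "mp_nodes q w = Sigma {..<q} (\<lambda>i. {..<w i})"
  by (auto simp: mp_nodes_def)

lemma finite_mp_nodes: "finite (mp_nodes q w)"
  by (simp add: mp_nodes_eq)

lemma card_mp_nodes: "card (mp_nodes q w) = (\<Sum>i<q. w i)"
  by (simp add: mp_nodes_eq)

lemma mp_nodes_cong: "(\<And>i. i < q \<Longrightarrow> w i = w' i) \<Longrightarrow> mp_nodes q w = mp_nodes q w'"
  by (auto simp: mp_nodes_def)

lemma mp_arcs_cong:
  assumes "\<And>i. i < q \<Longrightarrow> w i = w' i"
  shows "mp_arcs q F w = mp_arcs q F w'"
proof -
  have "mp_nodes q w = mp_nodes q w'"
    using assms by (rule mp_nodes_cong)
  then show ?thesis
    by (simp add: mp_arcs_def)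
qed

lemma mp_arcs_subset_nodes: "mp_arcs q F w \<subseteq> mp_nodes q w \<times> mp_nodes q w"
  by (auto simp: mp_arcs_def)

lemma mp_arcs_mono: "(\<And>i. w i \<le> w' i) \<Longrightarrow> mp_arcs q F w \<subseteq> mp_arcs q F w'"
  by (auto simp: mp_arcs_def mp_nodes_def intro: less_le_trans)

lemma mp_nodes_add_layer:
  assumes "C \<subseteq> {..<q}"
  shows "mp_nodes q (\<lambda>i. w i + (if i \<in> C then 1 else 0)) = mp_nodes q w \<union> (\<lambda>i. (i, w i)) ` C"
  using assms by (auto simp: mp_nodes_def split: if_splits)

lemma finite_self_map_restricts_to_bij:
  assumes "finite X" "X \<noteq> {}" "f ` X \<subseteq> X"
  obtains C where "C \<subseteq> X" "C \<noteq> {}" "bij_betw f C C"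
proof -
  let ?closed = "\<lambda>C. C \<subseteq> X \<and> C \<noteq> {} \<and> f ` C \<subseteq> C"
  obtain C where C: "?closed C" and least: "\<And>D. ?closed D \<Longrightarrow> card C \<le> card D"
    using ex_has_least_nat[of ?closed X card] assms by blast
  have "?closed (f ` C)"
    using C by auto
  then have "card C \<le> card (f ` C)"
    by (rule least)
  moreover have "finite C"
    using C assms(1) finite_subset by blast
  ultimately have "f ` C = C"
    using C card_seteq by blast
  with \<open>finite C\<close> have "bij_betw f C C"
    by (simp add: bij_betw_def finite_surj_inj)
  with C that show thesis by blast
qed

lemma balanced_support_has_permutation:
  fixes N :: "nat \<Rightarrow> nat \<Rightarrow> nat"
  assumes bal: "\<forall>i<q. (\<Sum>j<q. N i j) = (\<Sum>j<q. N j i)"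
    and "i0 < q" "j0 < q" "N i0 j0 > 0"
  obtains C \<sigma> where "C \<subseteq> {..<q}" "C \<noteq> {}" "bij_betw \<sigma> C C" "\<forall>a\<in>C. N a (\<sigma> a) > 0"
proof -
  define X where "X = {i. i < q \<and> (\<exists>j<q. N i j > 0)}"
  define \<sigma> where "\<sigma> i = (SOME j. j < q \<and> N i j > 0)" for i
  have \<sigma>: "\<sigma> i < q \<and> N i (\<sigma> i) > 0" if "i \<in> X" for i
    using that someI_ex[of "\<lambda>j. j < q \<and> N i j > 0"] by (auto simp: X_def \<sigma>_def)
  have "\<sigma> i \<in> X" if "i \<in> X" for i
  proof -
    have "N i (\<sigma> i) \<le> (\<Sum>k<q. N k (\<sigma> i))"
      using \<sigma> that X_def by (intro member_le_sum) auto
    then have "(\<Sum>k<q. N (\<sigma> i) k) > 0"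
      using \<sigma>[OF that] bal by auto
    then have "\<exists>k<q. N (\<sigma> i) k > 0"
      by (metis gr0I sum.neutral lessThan_iff)
    then show ?thesis
      using \<sigma>[OF that] by (simp add: X_def)
  qed
  moreover have "finite X" "X \<noteq> {}"
    using assms(2-) by (auto simp: X_def)
  ultimately obtain C where "C \<subseteq> X" "C \<noteq> {}" "bij_betw \<sigma> C C"
    using finite_self_map_restricts_to_bij[of X \<sigma>] by blast
  moreover from \<open>C \<subseteq> X\<close> have "C \<subseteq> {..<q}"
    by (auto simp: X_def)
  moreover from \<open>C \<subseteq> X\<close> have "\<forall>a\<in>C. N a (\<sigma> a) > 0"
    using \<sigma> by blast
  ultimately show thesis
    using that by blast
qed

definition perm_matrix :: "nat set \<Rightarrow> (nat \<Rightarrow> nat) \<Rightarrow> nat \<Rightarrow> nat \<Rightarrow> nat" where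
  "perm_matrix C \<sigma> i j = (if i \<in> C \<and> \<sigma> i = j then 1 else 0)"

lemma perm_matrix_row_sum:
  assumes "C \<subseteq> {..<q}" "\<sigma> ` C \<subseteq> C"
  shows "(\<Sum>j<q. perm_matrix C \<sigma> i j) = (if i \<in> C then 1 else 0)"
  using assms by (auto simp: perm_matrix_def)

lemma perm_matrix_col_sum:
  assumes "C \<subseteq> {..<q}" "bij_betw \<sigma> C C"
  shows "(\<Sum>j<q. perm_matrix C \<sigma> j i) = (if i \<in> C then 1 else 0)"
proof (cases "i \<in> C")
  case True
  then obtain a where a: "a \<in> C" "\<sigma> a = i"
    using assms(2) by (metis bij_betw_imp_surj_on imageE)
  then have "perm_matrix C \<sigma> j i = (if j = a then 1 else 0)" for j
    using assms(2) by (auto simp: perm_matrix_def bij_betw_def inj_on_def)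
  then show ?thesis
    using True a assms(1) by auto
next
  case False
  then have "perm_matrix C \<sigma> j i = 0" for j
    using assms(2) by (auto simp: perm_matrix_def bij_betw_def)
  then show ?thesis
    using False by simp
qed

lemma ham_decomp_mono: "ham_decomp V A H \<Longrightarrow> A \<subseteq> A' \<Longrightarrow> ham_decomp V A' H"
  by (auto simp: ham_decomp_def)

lemma ham_decomp_graph:
  assumes "bij_betw f V V" "(\<lambda>v. (v, f v)) ` V \<subseteq> A"
  shows "ham_decomp V A ((\<lambda>v. (v, f v)) ` V)"
proof -
  have "\<exists>u. (u, v) \<in> (\<lambda>v. (v, f v)) ` V" if "v \<in> V" for v
    using that bij_betw_imp_surj_on[OF assms(1)] by force
  with assms show ?thesis
    by (auto simp: ham_decomp_def bij_betw_def inj_on_def)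
qed

lemma ham_decomp_Un:
  assumes "ham_decomp V1 A H1" "ham_decomp V2 A H2"
    and "H1 \<subseteq> V1 \<times> V1" "H2 \<subseteq> V2 \<times> V2" "V1 \<inter> V2 = {}"
  shows "ham_decomp (V1 \<union> V2) A (H1 \<union> H2)"
proof -
  have "\<forall>v\<in>V1. \<exists>!u. (v, u) \<in> H1 \<union> H2" "\<forall>v\<in>V1. \<exists>!u. (u, v) \<in> H1 \<union> H2"
    using assms(1,4,5) unfolding ham_decomp_def by blast+
  moreover have "\<forall>v\<in>V2. \<exists>!u. (v, u) \<in> H1 \<union> H2" "\<forall>v\<in>V2. \<exists>!u. (u, v) \<in> H1 \<union> H2"
    using assms(2,3,5) unfolding ham_decomp_def by blast+
  moreover have "H1 \<union> H2 \<subseteq> A"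
    using assms(1,2) by (simp add: ham_decomp_def)
  ultimately show ?thesis
    by (simp add: ham_decomp_def ball_Un)
qed

lemma cycle_nodes_subset:
  assumes "H \<subseteq> V \<times> V" "v \<in> V"
  shows "cycle_nodes H v \<subseteq> V"
proof
  fix u assume "u \<in> cycle_nodes H v"
  then have "(v, u) \<in> H\<^sup>*"
    by (simp add: cycle_nodes_def)
  then show "u \<in> V"
    by induction (use assms in auto)
qed

lemma cycle_nodes_Un_left:
  assumes "H1 \<subseteq> V1 \<times> V1" "H2 \<subseteq> V2 \<times> V2" "V1 \<inter> V2 = {}" "v \<in> V1"
  shows "cycle_nodes (H1 \<union> H2) v = cycle_nodes H1 v"
proof
  show "cycle_nodes (H1 \<union> H2) v \<subseteq> cycle_nodes H1 v"
  proof
    fix u assume "u \<in> cycle_nodes (H1 \<union> H2) v"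
    then have "(v, u) \<in> (H1 \<union> H2)\<^sup>*"
      by (simp add: cycle_nodes_def)
    then have "(v, u) \<in> H1\<^sup>*"
    proof induction
      case (step y z)
      then have "y \<in> V1"
        using cycle_nodes_subset[OF assms(1,4)] by (auto simp: cycle_nodes_def)
      then have "(y, z) \<in> H1"
        using step.hyps(2) assms(2,3) by blast
      with step.IH show ?case
        by simp
    qed simp
    then show "u \<in> cycle_nodes H1 v"
      by (simp add: cycle_nodes_def)
  qed
qed (auto simp: cycle_nodes_def intro: rtrancl_mono[THEN subsetD])

lemma all_cycles_simple_Un:
  assumes "all_cycles_simple \<pi> V1 H1" "all_cycles_simple \<pi> V2 H2"
    and "H1 \<subseteq> V1 \<times> V1" "H2 \<subseteq> V2 \<times> V2" "V1 \<inter> V2 = {}"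
  shows "all_cycles_simple \<pi> (V1 \<union> V2) (H1 \<union> H2)"
  unfolding all_cycles_simple_def
proof
  fix v assume "v \<in> V1 \<union> V2"
  then show "inj_on \<pi> (cycle_nodes (H1 \<union> H2) v)"
  proof
    assume "v \<in> V1"
    then show ?thesis
      using assms(1) cycle_nodes_Un_left[OF assms(3-5)] by (simp add: all_cycles_simple_def)
  next
    assume "v \<in> V2"
    moreover have "V2 \<inter> V1 = {}"
      using assms(5) by blast
    ultimately show ?thesis
      using assms(2) cycle_nodes_Un_left[OF assms(4,3)] by (simp add: all_cycles_simple_def Un_commute)
  qed
qed

lemma all_cycles_simple_if_inj_on:
  "H \<subseteq> V \<times> V \<Longrightarrow> inj_on \<pi> V \<Longrightarrow> all_cycles_simple \<pi> V H"
  unfolding all_cycles_simple_def by (metis cycle_nodes_subset inj_on_subset)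

lemma n_count_Un:
  assumes "finite H1" "finite H2" "H1 \<inter> H2 = {}"
  shows "n_count (H1 \<union> H2) i j = n_count H1 i j + n_count H2 i j"
proof -
  have "{(v, u) \<in> H1 \<union> H2. fst v = i \<and> fst u = j}
      = {(v, u) \<in> H1. fst v = i \<and> fst u = j} \<union> {(v, u) \<in> H2. fst v = i \<and> fst u = j}"
    by blast
  then show ?thesis
    unfolding n_count_def
    by (simp only:) (rule card_Un_disjoint, use assms in \<open>auto intro: rev_finite_subset\<close>)
qed

lemma n_count_lifted_perm:
  "n_count ((\<lambda>a. ((a, w a), (\<sigma> a, w (\<sigma> a)))) ` C) i j = perm_matrix C \<sigma> i j"
proof -
  have "{(v, u) \<in> (\<lambda>a. ((a, w a), (\<sigma> a, w (\<sigma> a)))) ` C. fst v = i \<and> fst u = j}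
      = (if i \<in> C \<and> \<sigma> i = j then {((i, w i), (j, w j))} else {})"
    by auto
  then show ?thesis
    by (simp add: n_count_def perm_matrix_def)
qed

lemma simple_ham_decomp_add_layer:
  assumes H1: "ham_decomp (mp_nodes q w) (mp_arcs q F w) H1" "all_cycles_simple fst (mp_nodes q w) H1"
    and C: "C \<subseteq> {..<q}" "bij_betw \<sigma> C C" "\<forall>a\<in>C. \<sigma> a \<noteq> a \<and> (a, \<sigma> a) \<in> F"
  defines "w' \<equiv> \<lambda>i. w i + (if i \<in> C then 1 else 0)"
  shows "\<exists>H. ham_decomp (mp_nodes q w') (mp_arcs q F w') H
    \<and> (\<forall>i j. n_count H i j = n_count H1 i j + perm_matrix C \<sigma> i j)
    \<and> all_cycles_simple fst (mp_nodes q w') H"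
proof -
  define V where "V = mp_nodes q w"
  define top where "top i = (i, w i)" for i
  define L where "L = top ` C"
  define next_top where "next_top = top \<circ> \<sigma> \<circ> (fst :: nat \<times> nat \<Rightarrow> nat)"
  define H2 where "H2 = (\<lambda>v. (v, next_top v)) ` L"
  have nodes: "mp_nodes q w' = V \<union> L"
    unfolding w'_def V_def L_def top_def using C(1) by (rule mp_nodes_add_layer)
  have disj: "V \<inter> L = {}"
    by (auto simp: V_def L_def top_def mp_nodes_def)
  have H2_eq: "H2 = (\<lambda>a. (top a, top (\<sigma> a))) ` C"
    unfolding H2_def L_def image_image by (simp add: next_top_def top_def)
  have H1_sub: "H1 \<subseteq> V \<times> V"
    using H1(1) mp_arcs_subset_nodes unfolding ham_decomp_def V_def by blast
  have H2_sub: "H2 \<subseteq> L \<times> L"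
    using C(2) by (auto simp: H2_eq L_def bij_betw_def)
  have "bij_betw top C L" "bij_betw fst L C"
    by (auto simp: L_def top_def bij_betw_def inj_on_def image_image)
  then have "bij_betw next_top L L"
    unfolding next_top_def using C(2) by (blast intro: bij_betw_trans)
  moreover have "(\<lambda>v. (v, next_top v)) ` L \<subseteq> mp_arcs q F w'"
    using C H2_sub nodes by (auto simp: H2_def[symmetric] H2_eq top_def mp_arcs_def)
  ultimately have "ham_decomp L (mp_arcs q F w') H2"
    unfolding H2_def by (rule ham_decomp_graph)
  moreover have "ham_decomp V (mp_arcs q F w') H1"
    unfolding V_def using H1(1) by (rule ham_decomp_mono) (simp add: w'_def mp_arcs_mono)
  moreover have "all_cycles_simple fst L H2"
    using H2_sub by (rule all_cycles_simple_if_inj_on) (auto simp: L_def top_def inj_on_def)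
  moreover have "n_count (H1 \<union> H2) i j = n_count H1 i j + perm_matrix C \<sigma> i j" for i j
  proof -
    have "finite H1"
      using H1_sub by (rule finite_subset) (simp add: V_def finite_mp_nodes)
    moreover have "finite H2"
      using C(1) finite_subset by (auto simp: H2_eq)
    ultimately show ?thesis
      using H1_sub H2_sub disj by (subst n_count_Un) (auto simp: H2_eq top_def n_count_lifted_perm)
  qed
  ultimately show ?thesis
    using H1(2) H1_sub H2_sub disj unfolding nodes V_def[symmetric]
    by (intro exI[of _ "H1 \<union> H2"]) (simp add: ham_decomp_Un all_cycles_simple_Un)
qed

lemma balanced_matrix_simple_ham_decomp:
  fixes N :: "nat \<Rightarrow> nat \<Rightarrow> nat"
  assumes "\<forall>i<q. \<forall>j<q. N i j > 0 \<longrightarrow> (i, j) \<in> F" "\<forall>i<q. N i i = 0"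
    and "\<forall>i<q. (\<Sum>j<q. N i j) = (\<Sum>j<q. N j i)"
  shows "\<exists>H. ham_decomp (mp_nodes q (\<lambda>i. \<Sum>j<q. N i j)) (mp_arcs q F (\<lambda>i. \<Sum>j<q. N i j)) H
    \<and> (\<forall>i<q. \<forall>j<q. n_count H i j = N i j)
    \<and> all_cycles_simple fst (mp_nodes q (\<lambda>i. \<Sum>j<q. N i j)) H"
  using assms
proof (induction "\<Sum>i<q. \<Sum>j<q. N i j" arbitrary: N rule: less_induct)
  case less
  show ?case
  proof (cases "\<exists>i<q. \<exists>j<q. N i j > 0")
    case False
    then have "mp_nodes q (\<lambda>i. \<Sum>j<q. N i j) = {}"
      by (auto simp: mp_nodes_def)
    with False show ?thesis
      by (intro exI[of _ "{}"]) (auto simp: ham_decomp_def n_count_def all_cycles_simple_def)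
  next
    case True
    then obtain C \<sigma> where C: "C \<subseteq> {..<q}" "C \<noteq> {}" "bij_betw \<sigma> C C" "\<forall>a\<in>C. N a (\<sigma> a) > 0"
      using balanced_support_has_permutation[OF less.prems(3)] by blast
    have \<sigma>C: "\<sigma> ` C \<subseteq> C"
      using C(3) by (simp add: bij_betw_def)
    define P where "P = perm_matrix C \<sigma>"
    define N' where "N' i j = N i j - P i j" for i j
    have N_eq: "N i j = N' i j + P i j" for i j
      using C(4) by (auto simp: N'_def P_def perm_matrix_def)
    have row: "(\<Sum>j<q. N i j) = (\<Sum>j<q. N' i j) + (if i \<in> C then 1 else 0)" for i
      using perm_matrix_row_sum[OF C(1) \<sigma>C] by (simp add: N_eq sum.distrib P_def)
    have col: "(\<Sum>j<q. N j i) = (\<Sum>j<q. N' j i) + (if i \<in> C then 1 else 0)" for i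
      using perm_matrix_col_sum[OF C(1,3)] by (simp add: N_eq sum.distrib P_def)
    have "(\<Sum>i<q. \<Sum>j<q. N i j) = (\<Sum>i<q. \<Sum>j<q. N' i j) + card C"
      using C(1) by (simp add: row sum.distrib sum.If_cases Int_absorb1)
    moreover have "card C > 0"
      using C(1,2) finite_subset card_gt_0_iff by blast
    ultimately have smaller: "(\<Sum>i<q. \<Sum>j<q. N' i j) < (\<Sum>i<q. \<Sum>j<q. N i j)"
      by linarith
    have "\<forall>i<q. \<forall>j<q. N' i j > 0 \<longrightarrow> (i, j) \<in> F" "\<forall>i<q. N' i i = 0"
      using less.prems(1,2) by (metis N_eq add_gr_0, metis N_eq add_is_0)
    moreover have "\<forall>i<q. (\<Sum>j<q. N' i j) = (\<Sum>j<q. N' j i)"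
      using less.prems(3) row col by (metis add_right_imp_eq)
    ultimately obtain H1 where
      H1: "ham_decomp (mp_nodes q (\<lambda>i. \<Sum>j<q. N' i j)) (mp_arcs q F (\<lambda>i. \<Sum>j<q. N' i j)) H1"
        "\<forall>i<q. \<forall>j<q. n_count H1 i j = N' i j"
        "all_cycles_simple fst (mp_nodes q (\<lambda>i. \<Sum>j<q. N' i j)) H1"
      using less.hyps[OF smaller] by blast
    have "\<forall>a\<in>C. \<sigma> a \<noteq> a \<and> (a, \<sigma> a) \<in> F"
      using C \<sigma>C less.prems(1,2) by (metis image_subset_iff lessThan_iff less_irrefl subsetD)
    from simple_ham_decomp_add_layer[OF H1(1,3) C(1,3) this]
    obtain H where "ham_decomp (mp_nodes q (\<lambda>i. \<Sum>j<q. N i j)) (mp_arcs q F (\<lambda>i. \<Sum>j<q. N i j)) H"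
      "\<forall>i j. n_count H i j = n_count H1 i j + P i j"
      "all_cycles_simple fst (mp_nodes q (\<lambda>i. \<Sum>j<q. N i j)) H"
      unfolding row P_def by blast
    with H1(2) show ?thesis
      by (metis N_eq)
  qed
qed

lemma real_nat_floor_Ints: "x \<in> \<int> \<Longrightarrow> 0 \<le> x \<Longrightarrow> real (nat \<lfloor>x\<rfloor>) = x"
  by (auto elim: Ints_cases)

lemma in_calA_scaled_nat_matrix:
  assumes A: "in_calA q F A" and int: "\<forall>i<q. \<forall>j<q. real n * A i j \<in> \<int>"
  defines "N \<equiv> \<lambda>i j. nat \<lfloor>real n * A i j\<rfloor>"
  shows "\<forall>i<q. \<forall>j<q. N i j > 0 \<longrightarrow> (i, j) \<in> F"
    and "\<forall>i<q. (\<Sum>j<q. N i j) = (\<Sum>j<q. N j i)"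
    and "\<forall>i<q. nat \<lfloor>real n * (\<Sum>j<q. A i j)\<rfloor> = (\<Sum>j<q. N i j)"
    and "(\<Sum>i<q. \<Sum>j<q. N i j) = n"
    and "\<forall>i<q. \<forall>j<q. real (N i j) = real n * A i j"
proof -
  show N: "\<forall>i<q. \<forall>j<q. real (N i j) = real n * A i j"
    using A int unfolding N_def in_calA_def by (simp add: real_nat_floor_Ints)
  then have row: "real (\<Sum>j<q. N i j) = real n * (\<Sum>j<q. A i j)"
    and col: "real (\<Sum>j<q. N j i) = real n * (\<Sum>j<q. A j i)" if "i < q" for i
    using that by (simp_all add: sum_distrib_left)
  show "\<forall>i<q. \<forall>j<q. N i j > 0 \<longrightarrow> (i, j) \<in> F"
    using A N by (fastforce simp: in_calA_def)
  show "\<forall>i<q. (\<Sum>j<q. N i j) = (\<Sum>j<q. N j i)"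
    using A row col unfolding in_calA_def by (metis of_nat_eq_iff)
  show "\<forall>i<q. nat \<lfloor>real n * (\<Sum>j<q. A i j)\<rfloor> = (\<Sum>j<q. N i j)"
    using row by (metis floor_of_nat nat_int)
  have "real (\<Sum>i<q. \<Sum>j<q. N i j) = (\<Sum>i<q. real (\<Sum>j<q. N i j))"
    by (rule of_nat_sum)
  also have "\<dots> = real n * (\<Sum>i<q. \<Sum>j<q. A i j)"
    by (simp add: row sum_distrib_left del: of_nat_sum)
  also have "\<dots> = real n"
    using A[unfolded in_calA_def, THEN conjunct2, THEN conjunct2] by simp
  finally show "(\<Sum>i<q. \<Sum>j<q. N i j) = n"
    by (rule of_nat_eq_iff[THEN iffD1])
qed

text \<open>Neither \<open>F \<subseteq> {..<q} \<times> {..<q}\<close> nor the symmetry of \<open>F\<close> is needed: only arcs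
  between parts with \<open>A' i j > 0\<close> are used, and these lie in \<open>F\<close> by \<open>A' \<in> \<A>(S)\<close>.\<close>

theorem lemma8:
  fixes q n' :: nat and F :: "(nat \<times> nat) set" and A :: "nat \<Rightarrow> nat \<Rightarrow> real"
  assumes "F \<subseteq> {..<q} \<times> {..<q}" and "sym F"
    and "in_calA q F A"
    and "\<forall>i<q. \<forall>j<q. real n' * A i j \<in> \<int>"
    and "\<forall>i<q. A i i = 0"
  shows "let x = (\<lambda>i. \<Sum>j<q. A i j);
             w = (\<lambda>i. nat \<lfloor>real n' * x i\<rfloor>);
             V = mp_nodes q w
         in \<exists>H. ham_decomp V (mp_arcs q F w) H
               \<and> (\<forall>i<q. \<forall>j<q. real (n_count H i j) = real (card V) * A i j)
               \<and> all_cycles_simple fst V H"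
proof -
  define N where "N i j = nat \<lfloor>real n' * A i j\<rfloor>" for i j
  note N = in_calA_scaled_nat_matrix[OF assms(3,4), folded N_def]
  have "\<forall>i<q. N i i = 0"
    using assms(5) by (simp add: N_def)
  then obtain H where H:
      "ham_decomp (mp_nodes q (\<lambda>i. \<Sum>j<q. N i j)) (mp_arcs q F (\<lambda>i. \<Sum>j<q. N i j)) H"
      "\<forall>i<q. \<forall>j<q. n_count H i j = N i j"
      "all_cycles_simple fst (mp_nodes q (\<lambda>i. \<Sum>j<q. N i j)) H"
    using balanced_matrix_simple_ham_decomp[OF N(1) _ N(2)] by blast
  define w where "w i = nat \<lfloor>real n' * (\<Sum>j<q. A i j)\<rfloor>" for i
  have "mp_nodes q w = mp_nodes q (\<lambda>i. \<Sum>j<q. N i j)"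
    "mp_arcs q F w = mp_arcs q F (\<lambda>i. \<Sum>j<q. N i j)"
    using N(3) by (simp_all add: w_def cong: mp_nodes_cong mp_arcs_cong)
  moreover have "card (mp_nodes q (\<lambda>i. \<Sum>j<q. N i j)) = n'"
    using N(4) by (simp add: card_mp_nodes)
  ultimately show ?thesis
    using H N(5) unfolding Let_def w_def[symmetric] by auto
qed

end
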